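(* Let $m\neq n$ be integers $\ge2$ and let $f\in\mathcal{R}$ be nonzero with $U_mf=\lambda_mf$ and $U_nf=\lambda_nf$. Then $f$ is an eigenfunction of $U_{mn}$, and \[\chi_f(mn)=\chi_f(m)\chi_f(n).\]
   Context: $\mathcal{R}$ denotes the real vector space of rational functions $f(x)=A(x)/B(x)$ with $A,B\in\mathbb{R}[x]$, $B(0)\neq 0$ and $\deg A<\deg B$. For $f\in\mathcal{R}$ with Taylor expansion $f(x)=\sum_{n\ge0}a_nx^n$ at $0$ and a positive integer $q$, $U_qf(x)=\sum_{n\ge 0}a_{qn}x^n$. If $U_qf=\lambda_qf$, define $\chi_f(q)=\lambda_q/|\lambda_q|$ when $\lambda_q\neq0$ and $\chi_f(q)=0$ when $\lambda_q=0$. *)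

theory Defs
  imports "HOL-Computational_Algebra.Computational_Algebra"
begin

text \<open>A rational function f = A/B with B(0) \<noteq> 0 is identified with its Taylor
  expansion at 0, i.e. the formal power series A/B.  The space \<R>:\<close>
definition in_R :: "real fps \<Rightarrow> bool" where
  "in_R F \<longleftrightarrow> (\<exists>A B :: real poly. poly B 0 \<noteq> 0 \<and> degree A < degree B \<and>
                 F = fps_of_poly A / fps_of_poly B)"

definition U_op :: "nat \<Rightarrow> real fps \<Rightarrow> real fps" where
  "U_op q F = Abs_fps (\<lambda>n. F $ (q * n))"

definition is_eigen :: "nat \<Rightarrow> real fps \<Rightarrow> bool" where
  "is_eigen q F \<longleftrightarrow> F \<noteq> 0 \<and> (\<exists>c. U_op q F = fps_const c * F)"

text \<open>chi_f(q) = lambda_q/|lambda_q| (or 0 when lambda_q = 0), i.e. sgn lambda_q.\<close>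
definition chi :: "real fps \<Rightarrow> nat \<Rightarrow> real" where
  "chi F q = sgn (THE c. U_op q F = fps_const c * F)"

end

theory Submission
  imports Defs
begin

text \<open>\<open>U_(mn) = U_n \<circ> U_m\<close> holds coefficientwise on all power series, so a common
  eigenfunction of \<open>U_m\<close> and \<open>U_n\<close> is one of \<open>U_(mn)\<close> with eigenvalue \<open>\<lambda>_m \<lambda>_n\<close>,
  and \<open>sgn\<close> is multiplicative.\<close>

lemma U_op_mult: "U_op (m * n) F = U_op n (U_op m F)"
  by (simp add: U_op_def fps_eq_iff mult.assoc)

lemma U_op_fps_const_mult: "U_op q (fps_const c * F) = fps_const c * U_op q F"
  by (simp add: U_op_def fps_eq_iff)

lemma U_op_mult_eigen:
  assumes "U_op m F = fps_const a * F" and "U_op n F = fps_const b * F"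
  shows "U_op (m * n) F = fps_const (a * b) * F"
proof -
  have "U_op (m * n) F = fps_const a * U_op n F"
    by (simp add: U_op_mult assms(1) U_op_fps_const_mult)
  also have "\<dots> = fps_const (a * b) * F"
    by (simp add: assms(2) mult.assoc)
  finally show ?thesis .
qed

lemma chi_eq_sgn_eigenvalue:
  assumes "F \<noteq> 0" and "U_op q F = fps_const c * F"
  shows "chi F q = sgn c"
proof -
  have "(THE d. U_op q F = fps_const d * F) = c"
  proof (rule the_equality)
    fix d
    assume "U_op q F = fps_const d * F"
    with assms have "fps_const d = fps_const c"
      by (metis mult_cancel_right)
    then show "d = c" by simp
  qed (fact assms(2))
  then show ?thesis by (simp add: chi_def)
qed

theorem mainTheorem6:
  fixes f :: "real fps" and m n :: nat and lm ln :: real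
  assumes "m \<noteq> n" and "m \<ge> 2" and "n \<ge> 2"
    and "in_R f" and "f \<noteq> 0"
    and "U_op m f = fps_const lm * f" and "U_op n f = fps_const ln * f"
  shows "is_eigen (m * n) f \<and> chi f (m * n) = chi f m * chi f n"
proof -
  have eigen_mn: "U_op (m * n) f = fps_const (lm * ln) * f"
    using assms(6,7) by (rule U_op_mult_eigen)
  then have "is_eigen (m * n) f"
    using assms(5) by (auto simp: is_eigen_def)
  moreover have "chi f (m * n) = chi f m * chi f n"
    using chi_eq_sgn_eigenvalue[OF assms(5) eigen_mn]
      chi_eq_sgn_eigenvalue[OF assms(5) assms(6)]
      chi_eq_sgn_eigenvalue[OF assms(5) assms(7)]
    by (simp add: sgn_mult)
  ultimately show ?thesis ..
qed

end
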